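(* Let $\mathcal{A}\subset\mathbb{C}$ be a finite transmit alphabet, let $M_t,M_r\ge 1$, $\nu\ge 0$, $T>\nu$ be integers, and let $q\in\{1,\dots,M_t\}$. Let $\mathcal{C}$ be a code whose codewords are complex matrices $\mathbf{X}^{(1)}=[\mathbf{x}[0],\dots,\mathbf{x}[T-\nu-1],\mathbf{0},\dots,\mathbf{0}]\in\mathbb{C}^{M_t\times T}$ with $\mathbf{x}[n]\in\mathcal{A}^{M_t}$ for $0\le n\le T-\nu-1$ and last $\nu$ columns equal to zero. Suppose the diversity order of $\mathcal{C}$ over the $(\nu+1)$-tap ISI channel with $M_r$ receive antennas is $q(\nu+1)M_r$, i.e. $M_r\min_{\mathbf{X}_1^{(1)}\neq\mathbf{X}_2^{(1)}\in\mathcal{C}}\operatorname{rank}_{\mathbb{C}}\big(\Theta(\mathbf{X}_1^{(1)})-\Theta(\mathbf{X}_2^{(1)})\big)=q(\nu+1)M_r$. Then the rate $R=\frac{1}{T}\log_{|\mathcal{A}|}|\mathcal{C}|$ (in symbols per transmission) satisfies $R\le M_t-q+1$.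
   Context: For a matrix $\mathbf{X}^{(1)}=[\mathbf{x}[0],\dots,\mathbf{x}[T-\nu-1],\mathbf{0},\dots,\mathbf{0}]\in\mathbb{C}^{M_t\times T}$ (last $\nu$ columns zero), $\Theta(\mathbf{X}^{(1)})\in\mathbb{C}^{(\nu+1)M_t\times T}$ is the block-Toeplitz matrix with $\nu+1$ block rows, where block row $i$ ($i=0,\dots,\nu$) is $\mathbf{X}^{(1)}$ with its columns shifted right by $i$ positions (i.e. block row $i$ equals $[\mathbf{0},\dots,\mathbf{0},\mathbf{x}[0],\dots,\mathbf{x}[T-\nu-1],\mathbf{0},\dots,\mathbf{0}]$ with $i$ leading zero columns and $\nu-i$ trailing zero columns). This is the equivalent codeword seen through the channel $\mathbf{Y}=[\mathbf{H}_0,\dots,\mathbf{H}_\nu]\Theta(\mathbf{X}^{(1)})+\mathbf{Z}$, and the diversity order of a code is $M_r$ times the minimum rank of differences of these equivalent codewords. *)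

theory Defs
  imports Complex_Main "Jordan_Normal_Form.DL_Rank"
begin

(* Block-Toeplitz matrix Theta(X) with nu+1 block rows of Mt rows each:
   block row i (rows i*Mt .. i*Mt+Mt-1) is X with columns shifted right by i. *)
definition Theta :: "nat \<Rightarrow> nat \<Rightarrow> nat \<Rightarrow> complex mat \<Rightarrow> complex mat" where
  "Theta Mt T \<nu> X = mat ((\<nu>+1)*Mt) T
     (\<lambda>(r,c). let i = r div Mt; k = r mod Mt in
                if i \<le> c then X $$ (k, c - i) else 0)"

definition crank :: "complex mat \<Rightarrow> nat" where
  "crank M = vec_space.rank (dim_row M) M"

definition codeword :: "complex set \<Rightarrow> nat \<Rightarrow> nat \<Rightarrow> nat \<Rightarrow> complex mat \<Rightarrow> bool" where
  "codeword A Mt T \<nu> X \<longleftrightarrow> X \<in> carrier_mat Mt T \<and>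
     (\<forall>k<Mt. \<forall>n<T. (n < T - \<nu> \<longrightarrow> X $$ (k,n) \<in> A) \<and> (T - \<nu> \<le> n \<longrightarrow> X $$ (k,n) = 0))"

definition diversity_order :: "nat \<Rightarrow> nat \<Rightarrow> nat \<Rightarrow> nat \<Rightarrow> complex mat set \<Rightarrow> nat" where
  "diversity_order Mt Mr T \<nu> C = Mr * Min {crank (Theta Mt T \<nu> X1 - Theta Mt T \<nu> X2) | X1 X2. X1 \<in> C \<and> X2 \<in> C \<and> X1 \<noteq> X2}"

end

theory Submission
  imports Defs
begin

text \<open>If two distinct codewords agreed on the data entries of their
first \<open>Mt - q + 1\<close> rows, they would agree on those rows entirely, so every block row of the
difference of their \<open>\<Theta>\<close>-matrices would be zero outside its last \<open>q - 1\<close> rows; that difference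
would then have rank at most \<open>(\<nu> + 1)(q - 1) < q(\<nu> + 1)\<close>. Hence codewords are determined by
these \<open>(Mt - q + 1)(T - \<nu>)\<close> entries in \<open>A\<close>, and taking logarithms gives the rate bound.\<close>

lemma rank_le_card_nonzero_rows:
  fixes M :: "'a::field mat"
  assumes "finite R" "M \<in> carrier_mat n nc"
    and "\<And>i j. i < n \<Longrightarrow> j < nc \<Longrightarrow> i \<notin> R \<Longrightarrow> M $$ (i,j) = 0"
  shows "vec_space.rank n M \<le> card R"
  using assms
proof (induction R arbitrary: M rule: finite_induct)
  case empty
  then have "M = 0\<^sub>m n nc" by (intro eq_matI) auto
  then show ?case by (simp add: vec_space.rank_0I)
next
  case (insert r R)
  define M1 where "M1 = mat n nc (\<lambda>(i,j). if i = r then 0 else M $$ (i,j))"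
  define M2 where "M2 = mat n nc (\<lambda>(i,j). if i = r then M $$ (i,j) else 0)"
  have M1: "M1 \<in> carrier_mat n nc" and M2: "M2 \<in> carrier_mat n nc"
    unfolding M1_def M2_def by auto
  have split: "M = M1 + M2" using insert.prems(1) by (intro eq_matI) (auto simp: M1_def M2_def)
  have "vec_space.rank n M1 \<le> card R"
    by (rule insert.IH[OF M1]) (use insert.prems in \<open>auto simp: M1_def\<close>)
  moreover have "vec_space.rank n M2 \<le> 1"
    by (rule vec_space.rank_le_1_product_entries[OF M2, where f = "\<lambda>i. if i = r then 1 else 0"
          and g = "\<lambda>j. M $$ (r,j)"]) (auto simp: M2_def)
  moreover have "vec_space.rank n M \<le> vec_space.rank n M1 + vec_space.rank n M2"
    unfolding split by (rule vec_space.rank_subadditive[OF M1 M2])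
  ultimately show ?case using insert.hyps by simp
qed

lemma Theta_carrier: "Theta Mt T \<nu> X \<in> carrier_mat ((\<nu>+1)*Mt) T"
  unfolding Theta_def by simp

lemma Theta_index:
  assumes "r < (\<nu>+1)*Mt" "c < T"
  shows "Theta Mt T \<nu> X $$ (r,c) = (if r div Mt \<le> c then X $$ (r mod Mt, c - r div Mt) else 0)"
  using assms unfolding Theta_def by (simp add: Let_def)

lemma crank_Theta_diff_le_if_top_rows_agree:
  assumes agree: "\<And>k n. k < m \<Longrightarrow> n < T \<Longrightarrow> X1 $$ (k,n) = X2 $$ (k,n)"
  shows "crank (Theta Mt T \<nu> X1 - Theta Mt T \<nu> X2) \<le> (\<nu>+1) * (Mt - m)"
proof -
  let ?M = "Theta Mt T \<nu> X1 - Theta Mt T \<nu> X2"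
  define R where "R = (\<lambda>(i,k). i*Mt + k) ` ({..\<nu>} \<times> {m..<Mt})"
  have carrier: "?M \<in> carrier_mat ((\<nu>+1)*Mt) T"
    using Theta_carrier[of Mt T \<nu>] by (intro minus_carrier_mat) auto
  have "card R \<le> card ({..\<nu>} \<times> {m..<Mt})" unfolding R_def by (rule card_image_le) simp
  then have card_R: "card R \<le> (\<nu>+1) * (Mt - m)" by (simp add: card_cartesian_product)
  have "?M $$ (r,c) = 0" if "r < (\<nu>+1)*Mt" "c < T" "r \<notin> R" for r c
  proof -
    have "Mt > 0" using that(1) by (cases Mt) auto
    have "r div Mt \<le> \<nu>" using that(1) by (metis Suc_eq_plus1 less_Suc_eq_le less_mult_imp_div_less)
    moreover have "r = (\<lambda>(i,k). i*Mt + k) (r div Mt, r mod Mt)" by simp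
    ultimately have "r mod Mt < m"
      using that(3) \<open>Mt > 0\<close> unfolding R_def by (metis SigmaI atLeastLessThan_iff atMost_iff
          image_eqI mod_less_divisor not_le)
    moreover have "?M $$ (r,c) = Theta Mt T \<nu> X1 $$ (r,c) - Theta Mt T \<nu> X2 $$ (r,c)"
      using that(1,2) Theta_carrier[of Mt T \<nu> X2] by (intro index_minus_mat) auto
    ultimately show ?thesis
      using that(1,2) agree[of "r mod Mt" "c - r div Mt"] by (simp add: Theta_index)
  qed
  then have "vec_space.rank ((\<nu>+1)*Mt) ?M \<le> card R"
    by (intro rank_le_card_nonzero_rows[OF _ carrier]) (auto simp: R_def)
  then have "crank ?M \<le> card R"
    unfolding crank_def using carrier_matD(1)[OF Theta_carrier[of Mt T \<nu> X2]] by simp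
  with card_R show ?thesis by simp
qed

lemma crank_ge_if_diversity_order:
  assumes "finite C" "Mr > 0" "diversity_order Mt Mr T \<nu> C = d * Mr"
    and "X1 \<in> C" "X2 \<in> C" "X1 \<noteq> X2"
  shows "d \<le> crank (Theta Mt T \<nu> X1 - Theta Mt T \<nu> X2)"
proof -
  define S where "S = {crank (Theta Mt T \<nu> X1 - Theta Mt T \<nu> X2) | X1 X2.
    X1 \<in> C \<and> X2 \<in> C \<and> X1 \<noteq> X2}"
  have "S = (\<lambda>(X1,X2). crank (Theta Mt T \<nu> X1 - Theta Mt T \<nu> X2)) ` {p \<in> C \<times> C. fst p \<noteq> snd p}"
    unfolding S_def by force
  then have "finite S" using assms(1) by simp
  moreover have "Min S = d" using assms(2,3) unfolding diversity_order_def S_def by simp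
  moreover have "crank (Theta Mt T \<nu> X1 - Theta Mt T \<nu> X2) \<in> S"
    unfolding S_def using assms(4-6) by blast
  ultimately show ?thesis by (metis Min_le)
qed

lemma card_code_le_power:
  assumes "finite A" "1 \<le> q" "q \<le> Mt"
    and codewords: "\<forall>X\<in>C. codeword A Mt T \<nu> X"
    and rank: "\<And>X1 X2. X1 \<in> C \<Longrightarrow> X2 \<in> C \<Longrightarrow> X1 \<noteq> X2 \<Longrightarrow>
      q * (\<nu>+1) \<le> crank (Theta Mt T \<nu> X1 - Theta Mt T \<nu> X2)"
  shows "card C \<le> card A ^ ((Mt-q+1) * (T-\<nu>))"
proof -
  define I where "I = {0..<Mt-q+1} \<times> {0..<T-\<nu>}"
  define proj where "proj X = restrict (\<lambda>p. X $$ p) I" for X :: "complex mat"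
  have "proj X \<in> PiE I (\<lambda>_. A)" if "X \<in> C" for X
    using codewords that assms(2,3) unfolding proj_def I_def codeword_def by auto
  then have proj_into: "proj ` C \<subseteq> PiE I (\<lambda>_. A)" by blast
  have "inj_on proj C"
  proof (rule inj_onI, rule ccontr)
    fix X1 X2 assume X: "X1 \<in> C" "X2 \<in> C" "proj X1 = proj X2" "X1 \<noteq> X2"
    have "X1 $$ (k,n) = X2 $$ (k,n)" if "k < Mt-q+1" "n < T" for k n
    proof (cases "n < T - \<nu>")
      case True
      then have "(k,n) \<in> I" using that unfolding I_def by auto
      then show ?thesis using fun_cong[OF X(3), of "(k,n)"] unfolding proj_def by simp
    next
      case False
      moreover have "k < Mt" using that(1) assms(2,3) by linarith
      ultimately show ?thesis using codewords X(1,2) that(2) unfolding codeword_def by auto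
    qed
    then have "crank (Theta Mt T \<nu> X1 - Theta Mt T \<nu> X2) \<le> (\<nu>+1) * (q-1)"
      using crank_Theta_diff_le_if_top_rows_agree[of "Mt-q+1" T X1 X2 Mt \<nu>] assms(2,3) by simp
    moreover have "(\<nu>+1) * (q-1) < q * (\<nu>+1)" using assms(2) by (simp add: algebra_simps)
    ultimately show False using rank[OF X(1,2,4)] by linarith
  qed
  then have "card C \<le> card (PiE I (\<lambda>_. A))"
    using proj_into by (intro card_inj_on_le) (auto simp: I_def assms(1) finite_PiE)
  then show ?thesis by (simp add: card_PiE I_def card_cartesian_product)
qed

text \<open>No hypothesis on \<open>a\<close> or \<open>c\<close> is needed: \<open>ln 0 = 0\<close>, so \<open>log a c = 0\<close> whenever
\<open>a \<le> 1\<close> or \<open>c = 0\<close>.\<close>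
lemma log_le_if_le_power:
  fixes a c n :: nat
  assumes "c \<le> a ^ n"
  shows "log a c \<le> n"
proof (cases "a \<le> 1 \<or> c = 0")
  case True
  then have "log a c = 0" by (auto simp: log_def le_Suc_eq)
  then show ?thesis by simp
next
  case False
  then have "log a c \<le> log a (a ^ n)"
    using assms by (subst log_le_cancel_iff) (auto simp del: of_nat_power simp: of_nat_power[symmetric])
  then show ?thesis using False by (simp add: log_nat_power)
qed

theorem lemma1:
  fixes A :: "complex set" and C :: "complex mat set"
    and Mt Mr \<nu> T q :: nat
  assumes "finite A"
    and "Mt \<ge> 1" and "Mr \<ge> 1" and "T > \<nu>"
    and "1 \<le> q" and "q \<le> Mt"
    and "\<forall>X\<in>C. codeword A Mt T \<nu> X"
    and "diversity_order Mt Mr T \<nu> C = q * (\<nu>+1) * Mr"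
  shows "log (real (card A)) (real (card C)) / real T \<le> real Mt - real q + 1"
proof -
  have "card C \<le> card A ^ ((Mt-q+1) * (T-\<nu>))"
  proof (cases "finite C")
    case True
    then show ?thesis
      using assms crank_ge_if_diversity_order[of C Mr Mt T \<nu> "q * (\<nu>+1)"]
      by (intro card_code_le_power) auto
  qed simp
  then have "log (card A) (card C) \<le> real ((Mt-q+1) * (T-\<nu>))" by (rule log_le_if_le_power)
  also have "\<dots> \<le> real (Mt-q+1) * real T" unfolding of_nat_mult[symmetric] of_nat_le_iff by (intro mult_le_mono2) simp
  finally show ?thesis
    using assms(4,6) by (simp add: divide_le_eq of_nat_diff add.commute)
qed

end
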